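(* Let $\delta_0=\frac14-\frac{2}{\pi^2}$. For every $\epsilon>0$ there exists a set $A\subseteq\mathbb{N}$ having (natural) density greater than $\delta_0-\epsilon$ such that: $A+A$ contains no squarefree integer; $A+A+A$ contains all positive integers with finitely many exceptions; and the set of positive integers which are not squarefree and are not contained in $A+A$ has upper density at most $\epsilon$.
   Context: $A+A=\{a+b:a,b\in A\}$, $A+A+A=\{a+b+c:a,b,c\in A\}$. *)

theory Defs
  imports Complex_Main "HOL-Computational_Algebra.Squarefree" "HOL-Library.Extended_Real"
begin

definition sumset2 :: "nat set \<Rightarrow> nat set" where
  "sumset2 A = {a + b | a b. a \<in> A \<and> b \<in> A}"

definition sumset3 :: "nat set \<Rightarrow> nat set" where
  "sumset3 A = {a + b + c | a b c. a \<in> A \<and> b \<in> A \<and> c \<in> A}"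

definition count_ratio :: "nat set \<Rightarrow> nat \<Rightarrow> real" where
  "count_ratio A n = real (card (A \<inter> {1..n})) / real n"

definition has_density :: "nat set \<Rightarrow> real \<Rightarrow> bool" where
  "has_density A d \<longleftrightarrow> (count_ratio A \<longlongrightarrow> d) sequentially"

definition upper_density :: "nat set \<Rightarrow> ereal" where
  "upper_density A = limsup (\<lambda>n. ereal (count_ratio A n))"

end

theory Submission
  imports Defs "HOL-Analysis.Gamma_Function"
begin

text \<open>
  Fix N \<ge> 5, let P be the set of odd primes up to N and Q the product of p^2 over p \<in> P.
  The set A consists of the positive multiples of Q together with all n \<equiv> 2 (mod 4)
  that are divisible by p^2 for some p \<in> P.

  \<^item> A sum of two elements of A is divisible by 4 (both summands \<equiv> 2 mod 4) or by p^2
    for some p \<in> P, hence is never squarefree.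
  \<^item> Every large multiple of 4 is a sum 9a' + 25b' of two elements \<equiv> 2 (mod 4), hence
    lies in A + A; adding a suitable multiple kQ with 1 \<le> k \<le> 4 gives every large n in A + A + A.
  \<^item> A large non-squarefree n not in A + A has a square divisor m^2 with m > N: a square
    factor 4 or p^2 with p \<in> P would put n into A + A (for p^2, write n = (n - kQ) + kQ
    with n - kQ \<equiv> 2 mod 4).  Such n have upper density \<le> \<Sum>_{m>N} 1/m^2 \<le> 1/N.
  \<^item> A is periodic mod 4Q, so it has a density, which is at least 1/4 - (1/4)\<Prod>(1 - 1/p^2)
    by a sieve count over one period.  The elementary Euler inequality
    \<Prod>_{p<=N} (1 - 1/p^2) \<cdot> \<Sum>_{n<=N} 1/n^2 \<le> 1 bounds this from below by
    1/4 - 1/(3 \<Sum>_{n<=N} 1/n^2), which tends to 1/4 - 2/\<pi>^2.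
\<close>


section \<open>Counting periodic sets\<close>

lemma card_periodic_shift:
  fixes A :: "nat set"
  assumes per: "\<And>n. n \<ge> 1 \<Longrightarrow> n + T \<in> A \<longleftrightarrow> n \<in> A"
  shows "card (A \<inter> {1..n+T}) = card (A \<inter> {1..n}) + card (A \<inter> {1..T})"
proof -
  have split: "A \<inter> {1..n+T} = (A \<inter> {1..T}) \<union> (\<lambda>x. x + T) ` (A \<inter> {1..n})"
  proof (intro set_eqI iffI)
    fix x assume x: "x \<in> A \<inter> {1..n+T}"
    show "x \<in> (A \<inter> {1..T}) \<union> (\<lambda>x. x + T) ` (A \<inter> {1..n})"
    proof (cases "x \<le> T")
      case False
      then have "x - T \<in> A \<inter> {1..n}" using x per[of "x - T"] by auto
      then show ?thesis using False by (auto intro!: image_eqI[of x _ "x - T"])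
    qed (use x in auto)
  qed (use per in auto)
  have "card (A \<inter> {1..n+T}) = card (A \<inter> {1..T}) + card ((\<lambda>x. x + T) ` (A \<inter> {1..n}))"
    unfolding split by (rule card_Un_disjoint) auto
  also have "card ((\<lambda>x. x + T) ` (A \<inter> {1..n})) = card (A \<inter> {1..n})"
    by (rule card_image) (auto simp: inj_on_def)
  finally show ?thesis by simp
qed

lemma periodic_density:
  fixes A :: "nat set"
  assumes T: "T > 0" and per: "\<And>n. n \<ge> 1 \<Longrightarrow> n + T \<in> A \<longleftrightarrow> n \<in> A"
  shows "has_density A (real (card (A \<inter> {1..T})) / real T)"
proof -
  define f where "f n = card (A \<inter> {1..n})" for n
  define c where "c = f T"
  have bound: "\<bar>real T * real (f n) - real c * real n\<bar> \<le> real c * real T" for n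
  proof (induction n rule: less_induct)
    case (less n)
    show ?case
    proof (cases "n < T")
      case True
      have "f n \<le> c" unfolding f_def c_def by (rule card_mono) (use True in auto)
      then have "real T * real (f n) \<le> real c * real T"
        by (metis mult.commute mult_left_mono of_nat_0_le_iff of_nat_mono)
      moreover have "real c * real n \<le> real c * real T" using True by (intro mult_left_mono) auto
      moreover have "0 \<le> real T * real (f n)" "0 \<le> real c * real n" by simp_all
      ultimately show ?thesis unfolding abs_le_iff by linarith
    next
      case False
      have "f n = f (n - T) + c"
        using card_periodic_shift[OF per, of "n - T"] False unfolding f_def c_def by simp
      then show ?thesis using less.IH[of "n - T"] T False by (simp add: algebra_simps)
    qed
  qed
  have "(\<lambda>n. f n / real n - c / real T) \<longlonglongrightarrow> 0"
  proof (rule Lim_null_comparison)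
    show "\<forall>\<^sub>F n in sequentially. norm (f n / real n - c / real T) \<le> real c * (1 / real n)"
      using eventually_gt_at_top[of 0]
    proof eventually_elim
      case (elim n)
      have "norm (f n / real n - c / real T)
            = \<bar>real T * real (f n) - real c * real n\<bar> / (real T * real n)"
        using elim T by (simp add: field_simps)
      also have "\<dots> \<le> (real c * real T) / (real T * real n)"
        using bound[of n] by (intro divide_right_mono) auto
      finally show ?case using T by simp
    qed
    show "(\<lambda>n. real c * (1 / real n)) \<longlonglongrightarrow> 0"
      using tendsto_mult_right_zero[OF lim_inverse_n'] by simp
  qed
  then have "(\<lambda>n. f n / real n) \<longlonglongrightarrow> c / real T"
    by (rule LIM_zero_cancel)
  then show ?thesis unfolding has_density_def count_ratio_def f_def c_def .
qed

lemma periodic_add_mult: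
  fixes S :: "nat \<Rightarrow> bool"
  assumes per: "\<And>n. S (n + m) = S n"
  shows "S (n + m * k) = S n"
proof (induction k)
  case (Suc k)
  have "S (n + m * Suc k) = S ((n + m * k) + m)" by (simp add: algebra_simps)
  then show ?case using Suc per by simp
qed simp

lemma card_periodic_periods:
  fixes S :: "nat \<Rightarrow> bool"
  assumes per: "\<And>n. S (n + m) = S n"
  shows "card {n. n < m * k \<and> S n} = k * card {n. n < m \<and> S n}"
proof (induction k)
  case (Suc k)
  have split: "{n. n < m * Suc k \<and> S n} = {n. n < m * k \<and> S n} \<union> (\<lambda>x. x + m * k) ` {n. n < m \<and> S n}"
  proof (intro set_eqI iffI)
    fix x assume x: "x \<in> {n. n < m * Suc k \<and> S n}"
    show "x \<in> {n. n < m * k \<and> S n} \<union> (\<lambda>x. x + m * k) ` {n. n < m \<and> S n}"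
    proof (cases "x < m * k")
      case False
      then have shift: "x = (x - m * k) + m * k" "x - m * k < m" using x by auto
      moreover have "S (x - m * k)"
        using periodic_add_mult[of S m, OF per, of "x - m * k" k] x shift(1) by simp
      ultimately show ?thesis by (auto intro!: image_eqI[of x _ "x - m * k"])
    qed (use x in auto)
  qed (auto simp: periodic_add_mult[of S m, OF per])
  have "card {n. n < m * Suc k \<and> S n} = card {n. n < m * k \<and> S n} + card ((\<lambda>x. x + m * k) ` {n. n < m \<and> S n})"
    unfolding split by (rule card_Un_disjoint) auto
  also have "card ((\<lambda>x. x + m * k) ` {n. n < m \<and> S n}) = card {n. n < m \<and> S n}"
    by (rule card_image) (auto simp: inj_on_def)
  finally show ?case using Suc by simp
qed simp

lemma bij_betw_mult_mod:
  fixes m k :: nat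
  assumes "coprime m k" "m > 0"
  shows "bij_betw (\<lambda>j. (k * j) mod m) {..<m} {..<m}"
proof -
  have "inj_on (\<lambda>j. (k * j) mod m) {..<m}"
  proof (rule inj_onI)
    fix a b assume "a \<in> {..<m}" "b \<in> {..<m}" "(k * a) mod m = (k * b) mod m"
    then have "int k * int a mod int m = int k * int b mod int m"
      by (metis of_nat_mod of_nat_mult)
    then have "int a mod int m = int b mod int m"
      by (rule mult_mod_cancel_left) (use assms(1) in simp)
    then show "a = b" using \<open>a \<in> {..<m}\<close> \<open>b \<in> {..<m}\<close> by (simp flip: of_nat_mod)
  qed
  moreover have "(\<lambda>j. (k * j) mod m) ` {..<m} \<subseteq> {..<m}" using assms by auto
  ultimately show ?thesis by (simp add: bij_betw_def endo_inj_surj)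
qed

lemma card_periodic_multiples:
  fixes S :: "nat \<Rightarrow> bool"
  assumes per: "\<And>n. S (n + m) = S n" and cop: "coprime m k" and k: "k > 0" and m: "m > 0"
  shows "card {n. n < m * k \<and> S n \<and> k dvd n} = card {n. n < m \<and> S n}"
proof -
  define g where "g j = (k * j) mod m" for j
  have S_g: "S (k * j) = S (g j)" for j
    using periodic_add_mult[of S m, OF per, of "g j" "k * j div m"] by (simp add: g_def)
  have "{n. n < m * k \<and> S n \<and> k dvd n} = (\<lambda>j. k * j) ` {j \<in> {..<m}. S (g j)}"
  proof (intro set_eqI iffI)
    fix x assume "x \<in> {n. n < m * k \<and> S n \<and> k dvd n}"
    then obtain j where "x = k * j" "k * j < k * m" "S (k * j)" by (auto simp: mult.commute)
    then show "x \<in> (\<lambda>j. k * j) ` {j \<in> {..<m}. S (g j)}" by (auto simp: S_g)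
  qed (use k in \<open>auto simp: S_g\<close>)
  then have "card {n. n < m * k \<and> S n \<and> k dvd n} = card {j \<in> {..<m}. S (g j)}"
    using k by (simp add: card_image inj_on_def)
  also have "\<dots> = card (g ` {j \<in> {..<m}. S (g j)})"
    using bij_betw_mult_mod[OF cop m] unfolding g_def[abs_def] bij_betw_def
    by (metis (no_types, lifting) card_image inj_on_subset mem_Collect_eq subsetI)
  also have "g ` {j \<in> {..<m}. S (g j)} = {y \<in> g ` {..<m}. S y}" by blast
  also have "g ` {..<m} = {..<m}"
    using bij_betw_mult_mod[OF cop m] unfolding g_def[abs_def] bij_betw_def by simp
  finally show ?thesis by (simp add: lessThan_def)
qed

lemma card_periodic_nonmultiples:
  fixes S :: "nat \<Rightarrow> bool"
  assumes per: "\<And>n. S (n + m) = S n" and cop: "coprime m k" and k: "k > 0" and m: "m > 0"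
  shows "card {n. n < m * k \<and> S n \<and> \<not> k dvd n} = (k - 1) * card {n. n < m \<and> S n}"
proof -
  have "card {n. n < m * k \<and> S n}
        = card {n. n < m * k \<and> S n \<and> \<not> k dvd n} + card {n. n < m * k \<and> S n \<and> k dvd n}"
    by (subst card_Un_disjoint[symmetric]) (auto intro: arg_cong[where f = card])
  then show ?thesis
    using card_periodic_periods[of S m, OF per, of k] card_periodic_multiples[of S m, OF per cop k m]
    by (simp add: diff_mult_distrib)
qed

lemma card_residue_2_unsieved:
  fixes P :: "nat set"
  assumes "finite P" "\<forall>p\<in>P. prime p \<and> odd p"
  shows "card {n. n < 4 * (\<Prod>p\<in>P. p^2) \<and> n mod 4 = 2 \<and> (\<forall>p\<in>P. \<not> p^2 dvd n)}
         = (\<Prod>p\<in>P. p^2 - 1)"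
  using assms
proof (induction P rule: finite_induct)
  case empty
  have "{n::nat. n < 4 \<and> n mod 4 = 2} = {2}" by auto
  then show ?case by simp
next
  case (insert q P)
  define m where "m = 4 * (\<Prod>p\<in>P. p^2)"
  define S where "S n = (n mod 4 = 2 \<and> (\<forall>p\<in>P. \<not> p^2 dvd n))" for n :: nat
  have q: "prime q" "odd q" using insert by auto
  have per: "S (n + m) = S n" for n
  proof -
    have "p^2 dvd m" if "p \<in> P" for p
      unfolding m_def using dvd_prodI[OF insert(1) that, of power2] by simp
    then have "p^2 dvd n + m \<longleftrightarrow> p^2 dvd n" if "p \<in> P" for p
      using that by (simp add: dvd_add_left_iff)
    moreover have "(n + m) mod 4 = n mod 4" unfolding m_def by simp
    ultimately show ?thesis unfolding S_def by auto
  qed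
  have "coprime m q"
  proof -
    have "coprime 2 q" using q by simp
    then have "coprime (2^2) q" by (simp only: coprime_power_left_iff) simp
    moreover have "coprime (\<Prod>p\<in>P. p^2) q"
    proof (rule prod_coprime_left)
      fix p assume "p \<in> P"
      then have "coprime p q" using insert by (intro primes_coprime) auto
      then show "coprime (p^2) q" by simp
    qed
    ultimately show ?thesis unfolding m_def by simp
  qed
  then have cop: "coprime m (q^2)" by simp
  have m: "m > 0" unfolding m_def using insert by (auto intro: prime_gt_0_nat)
  have "4 * (\<Prod>p\<in>insert q P. p^2) = m * q^2" unfolding m_def using insert by simp
  then have "{n. n < 4 * (\<Prod>p\<in>insert q P. p^2) \<and> n mod 4 = 2 \<and> (\<forall>p\<in>insert q P. \<not> p^2 dvd n)}
      = {n. n < m * q^2 \<and> S n \<and> \<not> q^2 dvd n}"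
    unfolding S_def by auto
  also have "card \<dots> = (q^2 - 1) * card {n. n < m \<and> S n}"
    using card_periodic_nonmultiples[of S m, OF per cop _ m] q prime_gt_0_nat by simp
  also have "card {n. n < m \<and> S n} = (\<Prod>p\<in>P. p^2 - 1)"
    using insert unfolding m_def S_def by auto
  finally show ?case using insert by simp
qed


section \<open>The Euler product inequality\<close>

lemma euler_product_sieve:
  fixes P :: "nat set"
  assumes "finite P" "\<forall>p\<in>P. prime p"
  shows "(\<Prod>p\<in>P. 1 - 1 / real p ^ 2) * (\<Sum>n\<in>{1..M}. 1 / real n ^ 2)
         \<le> (\<Sum>n\<in>{n\<in>{1..M}. \<forall>p\<in>P. \<not> p dvd n}. 1 / real n ^ 2)"
  using assms
proof (induction P rule: finite_induct)
  case empty
  have "{n\<in>{1..M}. \<forall>p\<in>{}. \<not> p dvd n} = {1..M}" by auto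
  then show ?case by simp
next
  case (insert q P)
  define D where "D = {n\<in>{1..M}. \<forall>p\<in>P. \<not> p dvd n}"
  define f where "f n = 1 / real n ^ 2" for n :: nat
  have q1: "q > 1" using insert prime_gt_1_nat by simp
  have multiples: "(\<Sum>n\<in>{n\<in>D. q dvd n}. f n) \<le> (\<Sum>j\<in>D. f (q * j))"
  proof -
    have "{n\<in>D. q dvd n} \<subseteq> (\<lambda>j. q * j) ` D"
    proof
      fix n assume n: "n \<in> {n\<in>D. q dvd n}"
      then obtain j where j: "n = q * j" by blast
      have "j \<le> M" using n q1 le_trans[of j "q * j" M] unfolding j D_def by simp
      then have "j \<in> D" using n unfolding j D_def by (auto intro: Suc_leI)
      then show "n \<in> (\<lambda>j. q * j) ` D" using j by blast
    qed
    then have "(\<Sum>n\<in>{n\<in>D. q dvd n}. f n) \<le> (\<Sum>n\<in>(\<lambda>j. q * j) ` D. f n)"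
      by (intro sum_mono2) (auto simp: D_def f_def)
    also have "\<dots> = (\<Sum>j\<in>D. f (q * j))"
      using q1 by (subst sum.reindex) (auto simp: inj_on_def)
    finally show ?thesis .
  qed
  have "(\<Prod>p\<in>insert q P. 1 - 1 / real p ^ 2) * (\<Sum>n\<in>{1..M}. f n)
      = (1 - 1 / real q ^ 2) * ((\<Prod>p\<in>P. 1 - 1 / real p ^ 2) * (\<Sum>n\<in>{1..M}. f n))"
    using insert by simp
  also have "\<dots> \<le> (1 - 1 / real q ^ 2) * (\<Sum>n\<in>D. f n)"
    using insert q1 unfolding D_def f_def by (intro mult_left_mono) (auto simp: field_simps)
  also have "\<dots> = (\<Sum>n\<in>D. f n) - (\<Sum>j\<in>D. f (q * j))"
    by (simp add: f_def right_diff_distrib sum_subtractf sum_distrib_left power_mult_distrib mult.commute)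
  also have "\<dots> \<le> (\<Sum>n\<in>D. f n) - (\<Sum>n\<in>{n\<in>D. q dvd n}. f n)"
    using multiples by simp
  also have "\<dots> = (\<Sum>n\<in>D - {n\<in>D. q dvd n}. f n)"
    by (rule sum_diff[symmetric]) (simp_all add: D_def, blast)
  also have "D - {n\<in>D. q dvd n} = {n\<in>{1..M}. \<forall>p\<in>insert q P. \<not> p dvd n}"
    unfolding D_def by auto
  finally show ?case unfolding f_def .
qed

definition inverse_square_sum :: "nat \<Rightarrow> real" where
  "inverse_square_sum N = (\<Sum>n\<in>{1..N}. 1 / real n ^ 2)"

lemma inverse_square_sum_limit: "inverse_square_sum \<longlonglongrightarrow> pi^2 / 6"
proof -
  have "inverse_square_sum = (\<lambda>N. \<Sum>i<N. 1 / (1 + real i) ^ 2)"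
    unfolding inverse_square_sum_def by (auto simp: fun_eq_iff sum.atLeast1_atMost_eq)
  with inverse_squares_sums show ?thesis unfolding sums_def by simp
qed

text \<open>
  The Euler inequality: no n in [2, M] avoids all primes up to M, so the sieve of
  all those primes leaves only the term n = 1.
\<close>
lemma euler_product_inequality:
  "(\<Prod>p\<in>{p. prime p \<and> p \<le> M}. 1 - 1 / real p ^ 2) * inverse_square_sum M \<le> 1"
proof -
  let ?P = "{p. prime p \<and> p \<le> M}"
  have "{n\<in>{1..M}. \<forall>p\<in>?P. \<not> p dvd n} \<subseteq> {1}"
  proof
    fix n assume n: "n \<in> {n\<in>{1..M}. \<forall>p\<in>?P. \<not> p dvd n}"
    show "n \<in> {1}"
    proof (rule ccontr)
      assume "n \<notin> {1}"
      then obtain p where "prime p" "p dvd n" using prime_factor_nat by blast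
      moreover have "p \<le> n" using \<open>p dvd n\<close> n by (auto intro: dvd_imp_le)
      ultimately show False using n by auto
    qed
  qed
  then have "(\<Sum>n\<in>{n\<in>{1..M}. \<forall>p\<in>?P. \<not> p dvd n}. 1 / real n ^ 2) \<le> (\<Sum>n\<in>{1::nat}. 1 / real n ^ 2)"
    by (intro sum_mono2) auto
  moreover have "(\<Prod>p\<in>?P. 1 - 1 / real p ^ 2) * inverse_square_sum M
                 \<le> (\<Sum>n\<in>{n\<in>{1..M}. \<forall>p\<in>?P. \<not> p dvd n}. 1 / real n ^ 2)"
    unfolding inverse_square_sum_def by (rule euler_product_sieve) auto
  ultimately show ?thesis by simp
qed


section \<open>Numbers with a large square divisor\<close>

text \<open>Telescoping bound for a tail of the series of inverse squares.\<close>
lemma inverse_squares_tail: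
  fixes N x :: nat
  assumes "N \<ge> 1" "x \<ge> N"
  shows "(\<Sum>m\<in>{N<..x}. 1 / real m ^ 2) \<le> 1 / real N - 1 / real x"
  using assms(2)
proof (induction x rule: nat_induct_at_least)
  case (Suc x)
  have x: "real x \<ge> 1" using Suc assms(1) by simp
  have "1 / real (Suc x) ^ 2 \<le> 1 / (real x * real (Suc x))"
    using x by (intro divide_left_mono) (auto simp: power2_eq_square)
  also have "\<dots> = 1 / real x - 1 / real (Suc x)" using x by (simp add: field_simps)
  finally have "1 / real (Suc x) ^ 2 \<le> 1 / real x - 1 / real (Suc x)" .
  moreover have "{N<..Suc x} = insert (Suc x) {N<..x}" using Suc by auto
  ultimately show ?case using Suc.IH by simp
qed simp

lemma card_multiples_le:
  fixes d x :: nat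
  assumes "d > 0"
  shows "real (card {n\<in>{1..x}. d dvd n}) \<le> real x / real d"
proof -
  have "{n\<in>{1..x}. d dvd n} \<subseteq> (\<lambda>j. d * j) ` {1..x div d}"
  proof
    fix n assume n: "n \<in> {n\<in>{1..x}. d dvd n}"
    then obtain j where j: "n = d * j" by blast
    have "j = (d * j) div d" using assms by simp
    also have "\<dots> \<le> x div d" using n j by (intro div_le_mono) auto
    moreover have "j \<ge> 1" using n j by (cases j) auto
    ultimately show "n \<in> (\<lambda>j. d * j) ` {1..x div d}" using j by auto
  qed
  then have "card {n\<in>{1..x}. d dvd n} \<le> card ((\<lambda>j. d * j) ` {1..x div d})"
    by (intro card_mono) auto
  also have "\<dots> \<le> x div d" using card_image_le[of "{1..x div d}" "\<lambda>j. d * j"] by simp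
  finally have "card {n\<in>{1..x}. d dvd n} \<le> x div d" .
  then have "real (card {n\<in>{1..x}. d dvd n}) \<le> real (x div d)" by simp
  also have "\<dots> \<le> real x / real d" by (rule of_nat_div_le_of_nat)
  finally show ?thesis .
qed

text \<open>
  At most x/N of the numbers 1, ..., x have a square divisor m^2 with m > N,
  by the union bound and the tail estimate for the inverse squares.
\<close>
lemma card_large_square_divisor:
  fixes N x :: nat
  assumes N: "N \<ge> 1"
  shows "real (card {n\<in>{1..x}. \<exists>m>N. m^2 dvd n}) \<le> real x / real N"
proof -
  have "{n\<in>{1..x}. \<exists>m>N. m^2 dvd n} \<subseteq> (\<Union>m\<in>{N<..x}. {n\<in>{1..x}. m^2 dvd n})"
  proof
    fix n assume n: "n \<in> {n\<in>{1..x}. \<exists>m>N. m^2 dvd n}"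
    then obtain m where m: "N < m" "m^2 dvd n" by blast
    have "m \<le> m^2" by (simp add: power2_eq_square)
    also have "m^2 \<le> n" using m n by (intro dvd_imp_le) auto
    finally show "n \<in> (\<Union>m\<in>{N<..x}. {n\<in>{1..x}. m^2 dvd n})" using m n by auto
  qed
  then have "card {n\<in>{1..x}. \<exists>m>N. m^2 dvd n} \<le> (\<Sum>m\<in>{N<..x}. card {n\<in>{1..x}. m^2 dvd n})"
    by (intro order.trans[OF card_mono card_UN_le]) auto
  then have "real (card {n\<in>{1..x}. \<exists>m>N. m^2 dvd n})
             \<le> (\<Sum>m\<in>{N<..x}. real (card {n\<in>{1..x}. m^2 dvd n}))"
    by (simp flip: of_nat_sum)
  also have "\<dots> \<le> (\<Sum>m\<in>{N<..x}. real x * (1 / real m ^ 2))"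
    using card_multiples_le[of "_^2" x] by (intro sum_mono) auto
  also have "\<dots> = real x * (\<Sum>m\<in>{N<..x}. 1 / real m ^ 2)" by (simp add: sum_distrib_left)
  also have "\<dots> \<le> real x * (1 / real N)"
  proof (intro mult_left_mono)
    show "(\<Sum>m\<in>{N<..x}. 1 / real m ^ 2) \<le> 1 / real N"
    proof (cases "x \<ge> N")
      case True
      have "0 \<le> 1 / real x" by simp
      then show ?thesis using inverse_squares_tail[OF N True] by linarith
    qed simp
  qed simp
  finally show ?thesis by simp
qed

lemma upper_density_large_square_divisors:
  fixes E :: "nat set" and N C :: nat
  assumes N: "N \<ge> 1" and E: "\<And>n. n \<in> E \<Longrightarrow> n > C \<Longrightarrow> \<exists>m>N. m^2 dvd n"
  shows "upper_density E \<le> ereal (1 / real N)"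
proof -
  have bound: "count_ratio E x \<le> real C / real x + 1 / real N" if x: "x > 0" for x
  proof -
    have "E \<inter> {1..x} \<subseteq> {1..C} \<union> {n\<in>{1..x}. \<exists>m>N. m^2 dvd n}"
      using E by (auto simp: not_le)
    then have "card (E \<inter> {1..x}) \<le> card {1..C} + card {n\<in>{1..x}. \<exists>m>N. m^2 dvd n}"
      by (intro order.trans[OF card_mono card_Un_le]) auto
    then have "real (card (E \<inter> {1..x})) \<le> real C + real x / real N"
      using card_large_square_divisor[OF N, of x] by simp
    then have "count_ratio E x \<le> (real C + real x / real N) / real x"
      unfolding count_ratio_def by (intro divide_right_mono) auto
    also have "\<dots> = real C / real x + 1 / real N" using x by (simp add: field_simps)
    finally show ?thesis .
  qed
  have "upper_density E \<le> Limsup sequentially (\<lambda>x. ereal (real C / real x + 1 / real N))"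
    unfolding upper_density_def
    by (intro Limsup_mono eventually_mono[OF eventually_gt_at_top[of 0]]) (simp add: bound)
  also have "\<dots> = ereal (1 / real N)"
    by (intro lim_imp_Limsup) (auto intro!: tendsto_eq_intros lim_const_over_n)
  finally show ?thesis .
qed


text \<open>
  Every multiple of 4 beyond 850 is a + b with a, b \<equiv> 2 (mod 4), 9 | a and 25 | b:
  take b = 50 + 100 j with j \<equiv> n + 4 (mod 9), so that b \<equiv> n (mod 9).
\<close>
lemma multiple_of_4_split:
  fixes n :: nat
  assumes "4 dvd n" "n > 850"
  shows "\<exists>a b. n = a + b \<and> a > 0 \<and> b > 0 \<and> a mod 4 = 2 \<and> b mod 4 = 2 \<and> 9 dvd a \<and> 25 dvd b"
proof -
  define j where "j = (n + 4) mod 9"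
  define b where "b = 50 + 100 * j"
  define a where "a = n - b"
  have "j < 9" unfolding j_def by simp
  then have ab: "n = a + b" "a > 0" unfolding a_def b_def using assms(2) by simp_all
  have b_forms: "b = 25 * (2 + 4 * j)" "b = 2 + 4 * (25 * j + 12)" unfolding b_def by simp_all
  have b: "b mod 4 = 2" "25 dvd b"
    by (subst b_forms(2), simp only: mod_mult_self2, simp) (subst b_forms(1), rule dvd_triv_left)
  have "9 dvd (n + 4) - j" unfolding j_def by (simp add: minus_mod_eq_mult_div)
  then have "9 dvd ((n + 4) - j) - 9 * (6 + 11 * j)" by (rule dvd_diff_nat) simp
  also have "(n + 4) - j - 9 * (6 + 11 * j) = a" using ab unfolding b_def by simp
  finally have "9 dvd a" .
  have "4 dvd a + b" using ab(1) assms(1) by simp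
  then have "a mod 4 = 2" using b(1) by presburger
  moreover have "b > 0" unfolding b_def by simp
  ultimately show ?thesis using ab b \<open>9 dvd a\<close> by blast
qed

text \<open>
  An odd Q is a unit modulo 4, so a multiple Q k with 1 \<le> k \<le> 4 hits every residue;
  explicitly k = 1 + ((Q r + 3) mod 4) works because Q^2 \<equiv> 1 (mod 4).
\<close>
lemma odd_times_residue:
  fixes Q r :: nat
  assumes "odd Q"
  shows "\<exists>k. 1 \<le> k \<and> k \<le> 4 \<and> (Q * k) mod 4 = r mod 4"
proof -
  obtain t where "Q = 2 * t + 1" using assms oddE by blast
  then have sq: "Q * Q = 4 * (t * t + t) + 1" by (simp add: algebra_simps)
  define k where "k = Suc ((Q * r + 3) mod 4)"
  have "(Q * k) mod 4 = (Q * (Q * r + 3) + Q) mod 4"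
    unfolding k_def by simp (metis add.commute mod_add_right_eq mod_mult_right_eq)
  also have "Q * (Q * r + 3) + Q = (Q * Q) * r + 4 * Q" by (simp add: algebra_simps)
  also have "\<dots> = r + 4 * ((t * t + t) * r + Q)" unfolding sq by (simp add: algebra_simps)
  also have "(r + 4 * ((t * t + t) * r + Q)) mod 4 = r mod 4" by (rule mod_mult_self2)
  finally have "(Q * k) mod 4 = r mod 4" .
  moreover have "1 \<le> k" "k \<le> 4" unfolding k_def by simp_all
  ultimately show ?thesis by blast
qed

lemma subtract_odd_multiple:
  fixes Q n s :: nat
  assumes "odd Q" "4 * Q \<le> n" "s < 4"
  shows "\<exists>k. 1 \<le> k \<and> k \<le> 4 \<and> (n - Q * k) mod 4 = s"
proof -
  obtain k where k: "1 \<le> k" "k \<le> 4" "(Q * k) mod 4 = (n + 4 - s) mod 4"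
    using odd_times_residue[OF assms(1), of "n + 4 - s"] by blast
  have le: "Q * k \<le> n" using mult_le_mono2[OF k(2), of Q] assms(2) by linarith
  then have "4 dvd (n + 4 - s) - Q * k"
    using k(3) assms(3) by (subst mod_eq_dvd_iff_nat[symmetric]) simp_all
  then obtain c where "(n + 4 - s) - Q * k = 4 * c" by blast
  then have "n - Q * k = 4 * (c - 1) + s" using le assms(3) by arith
  then have "(n - Q * k) mod 4 = s" using assms(3) by simp
  then show ?thesis using k(1,2) by blast
qed


section \<open>The construction\<close>

definition odd_primes_upto :: "nat \<Rightarrow> nat set" where
  "odd_primes_upto N = {p. prime p \<and> odd p \<and> p \<le> N}"

definition sieve_modulus :: "nat \<Rightarrow> nat" where
  "sieve_modulus N = (\<Prod>p\<in>odd_primes_upto N. p^2)"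

definition sieve_set :: "nat \<Rightarrow> nat set" where
  "sieve_set N = {n. 0 < n \<and> ((n mod 4 = 2 \<and> (\<exists>p\<in>odd_primes_upto N. p^2 dvd n))
                              \<or> sieve_modulus N dvd n)}"

lemma finite_odd_primes_upto: "finite (odd_primes_upto N)"
  unfolding odd_primes_upto_def by auto

lemma square_dvd_sieve_modulus: "p \<in> odd_primes_upto N \<Longrightarrow> p^2 dvd sieve_modulus N"
  unfolding sieve_modulus_def by (rule dvd_prodI[OF finite_odd_primes_upto])

lemma odd_sieve_modulus: "odd (sieve_modulus N)"
  unfolding sieve_modulus_def using finite_odd_primes_upto
  by (auto simp: even_prod_iff odd_primes_upto_def)

lemma multiple_in_sieve_set: "k \<ge> 1 \<Longrightarrow> sieve_modulus N * k \<in> sieve_set N"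
  unfolding sieve_set_def using odd_pos[OF odd_sieve_modulus] by auto

lemma sieve_set_sum_square_factor:
  assumes N: "N \<ge> 3" and a: "a \<in> sieve_set N" and b: "b \<in> sieve_set N"
  shows "\<exists>d>1. d^2 dvd a + b"
proof -
  let ?P = "odd_primes_upto N" and ?Q = "sieve_modulus N"
  have prime_gt_1: "p > 1" if "p \<in> ?P" for p using that prime_gt_1_nat by (simp add: odd_primes_upto_def)
  have three: "3 \<in> ?P" using N by (simp add: odd_primes_upto_def)
  consider "?Q dvd a" "?Q dvd b"
    | p where "p \<in> ?P" "p^2 dvd a" "?Q dvd b"
    | p where "p \<in> ?P" "?Q dvd a" "p^2 dvd b"
    | "a mod 4 = 2" "b mod 4 = 2"
    using a b unfolding sieve_set_def by blast
  then show ?thesis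
  proof cases
    case 1
    then have "3^2 dvd a + b" using square_dvd_sieve_modulus[OF three] by (metis dvd_add dvd_trans)
    then show ?thesis by (intro exI[of _ 3]) simp
  next
    case (2 p)
    then have "p^2 dvd a + b" using square_dvd_sieve_modulus[of p N] by (metis dvd_add dvd_trans)
    then show ?thesis using prime_gt_1[OF 2(1)] by blast
  next
    case (3 p)
    then have "p^2 dvd a + b" using square_dvd_sieve_modulus[of p N] by (metis dvd_add dvd_trans)
    then show ?thesis using prime_gt_1[OF 3(1)] by blast
  next
    case 4
    then have "(a + b) mod 4 = 0" by (simp add: mod_add_eq[symmetric])
    then have "2^2 dvd a + b" by (simp add: mod_eq_0_iff_dvd)
    then show ?thesis by (intro exI[of _ 2]) simp
  qed
qed

lemma sumset2_sieve_set_not_squarefree: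
  assumes "N \<ge> 3" "x \<in> sumset2 (sieve_set N)"
  shows "\<not> squarefree x"
proof -
  obtain a b where "x = a + b" "a \<in> sieve_set N" "b \<in> sieve_set N"
    using assms(2) unfolding sumset2_def by blast
  then obtain d where "d > 1" "d^2 dvd x" using sieve_set_sum_square_factor[OF assms(1)] by blast
  then show ?thesis by (intro not_squarefreeI) auto
qed

lemma multiple_of_4_in_sumset2:
  assumes N: "N \<ge> 5" and n: "4 dvd n" "n > 850"
  shows "n \<in> sumset2 (sieve_set N)"
proof -
  obtain a b where ab: "n = a + b" "a > 0" "b > 0" "a mod 4 = 2" "b mod 4 = 2" "9 dvd a" "25 dvd b"
    using multiple_of_4_split[OF n] by blast
  have "3 \<in> odd_primes_upto N" "5 \<in> odd_primes_upto N" using N by (simp_all add: odd_primes_upto_def)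
  then have "a \<in> sieve_set N" "b \<in> sieve_set N"
    using ab unfolding sieve_set_def by (fastforce intro!: bexI[of _ 3], fastforce intro!: bexI[of _ 5])
  then show ?thesis using ab(1) unfolding sumset2_def by blast
qed

text \<open>Adding k Q for a suitable k \<in> {1, ..., 4} reduces everything large to the previous case.\<close>
lemma large_in_sumset3:
  assumes N: "N \<ge> 5" and n: "n > 4 * sieve_modulus N + 850"
  shows "n \<in> sumset3 (sieve_set N)"
proof -
  let ?Q = "sieve_modulus N"
  obtain k where k: "1 \<le> k" "k \<le> 4" "(n - ?Q * k) mod 4 = 0"
    using subtract_odd_multiple[OF odd_sieve_modulus, of N n 0] n by auto
  have le: "?Q * k \<le> 4 * ?Q" using k(2) by simp
  then have "n - ?Q * k > 850" using n by linarith
  then have "n - ?Q * k \<in> sumset2 (sieve_set N)"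
    using multiple_of_4_in_sumset2[OF N] k(3) by (simp add: mod_eq_0_iff_dvd)
  then obtain a b where ab: "n - ?Q * k = a + b" "a \<in> sieve_set N" "b \<in> sieve_set N"
    unfolding sumset2_def by blast
  have "n = a + b + ?Q * k" using ab(1) le n by linarith
  then show ?thesis
    using ab(2,3) multiple_in_sieve_set[OF k(1), of N] unfolding sumset3_def by blast
qed

text \<open>
  A large non-squarefree number outside A + A has no square factor 4 or p^2 with p an odd
  prime \<le> N (those would place it in A + A), hence a square factor m^2 with m > N.
\<close>
lemma large_square_factor_outside_sumset2:
  assumes N: "N \<ge> 5" and n: "n > 4 * sieve_modulus N + 850"
    and nsf: "\<not> squarefree n" and notin: "n \<notin> sumset2 (sieve_set N)"
  shows "\<exists>m>N. m^2 dvd n"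
proof -
  let ?Q = "sieve_modulus N"
  have "n \<noteq> 0" using n by simp
  then obtain p where p: "prime p" "p^2 dvd n" using nsf squarefree_factorial_semiring by blast
  show ?thesis
  proof (rule ccontr)
    assume "\<not> ?thesis"
    then have "p \<le> N" using p(2) by (cases "p > N") auto
    show False
    proof (cases "p = 2")
      case True
      then show False using multiple_of_4_in_sumset2[OF N] p(2) n notin by simp
    next
      case False
      then have P: "p \<in> odd_primes_upto N"
        using p \<open>p \<le> N\<close> prime_odd_nat[of p] prime_ge_2_nat[of p] unfolding odd_primes_upto_def by simp
      obtain k where k: "1 \<le> k" "k \<le> 4" "(n - ?Q * k) mod 4 = 2"
        using subtract_odd_multiple[OF odd_sieve_modulus, of N n 2] n by auto
      have le: "?Q * k \<le> 4 * ?Q" using k(2) by simp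
      have "p^2 dvd ?Q * k" using square_dvd_sieve_modulus[OF P] by simp
      then have "p^2 dvd n - ?Q * k" using p(2) by (rule dvd_diff_nat[rotated])
      then have "n - ?Q * k \<in> sieve_set N" using k(3) P n le unfolding sieve_set_def by auto
      moreover have "n = (n - ?Q * k) + ?Q * k" using le n by linarith
      ultimately have "n \<in> sumset2 (sieve_set N)"
        using multiple_in_sieve_set[OF k(1), of N] unfolding sumset2_def by blast
      then show False using notin by simp
    qed
  qed
qed

section \<open>The density of the construction\<close>

lemma sieve_set_periodic:
  assumes "n \<ge> 1"
  shows "n + 4 * sieve_modulus N \<in> sieve_set N \<longleftrightarrow> n \<in> sieve_set N"
proof -
  have "p^2 dvd n + 4 * sieve_modulus N \<longleftrightarrow> p^2 dvd n" if "p \<in> odd_primes_upto N" for p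
    using dvd_mult[OF square_dvd_sieve_modulus[OF that], of 4] by (simp add: dvd_add_left_iff)
  moreover have "sieve_modulus N dvd n + 4 * sieve_modulus N \<longleftrightarrow> sieve_modulus N dvd n"
    by (simp add: dvd_add_left_iff)
  ultimately show ?thesis using assms unfolding sieve_set_def by auto
qed

text \<open>
  Complement of the sieve count: among the n < 4 \<Prod>p^2 with n \<equiv> 2 (mod 4), exactly
  \<Prod>p^2 - \<Prod>(p^2 - 1) are divisible by some p^2 (there are \<Prod>p^2 of them in all).
\<close>
lemma card_residue_2_sieved:
  fixes P :: "nat set"
  assumes "finite P" "\<forall>p\<in>P. prime p \<and> odd p"
  shows "card {n. n < 4 * (\<Prod>p\<in>P. p^2) \<and> n mod 4 = 2 \<and> (\<exists>p\<in>P. p^2 dvd n)}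
         + (\<Prod>p\<in>P. p^2 - 1) = (\<Prod>p\<in>P. p^2)"
proof -
  define Q where "Q = (\<Prod>p\<in>P. p^2)"
  have "{n::nat. n < 4 \<and> n mod 4 = 2} = {2}" by auto
  then have all: "card {n. n < 4 * Q \<and> n mod 4 = 2} = Q"
    using card_periodic_periods[of "\<lambda>n. n mod 4 = 2" 4 Q] by simp
  have "{n. n < 4 * Q \<and> n mod 4 = 2}
        = {n. n < 4 * Q \<and> n mod 4 = 2 \<and> (\<exists>p\<in>P. p^2 dvd n)}
          \<union> {n. n < 4 * Q \<and> n mod 4 = 2 \<and> (\<forall>p\<in>P. \<not> p^2 dvd n)}" by auto
  then have "card {n. n < 4 * Q \<and> n mod 4 = 2}
        = card {n. n < 4 * Q \<and> n mod 4 = 2 \<and> (\<exists>p\<in>P. p^2 dvd n)}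
          + card {n. n < 4 * Q \<and> n mod 4 = 2 \<and> (\<forall>p\<in>P. \<not> p^2 dvd n)}"
    by (subst card_Un_disjoint[symmetric]) (auto intro: arg_cong[where f = card])
  then show ?thesis
    using all card_residue_2_unsieved[OF assms] unfolding Q_def[symmetric] by simp
qed

lemma prod_inverse_squares_ratio:
  fixes P :: "nat set"
  assumes "\<forall>p\<in>P. p > 0"
  shows "real (\<Prod>p\<in>P. p^2 - 1) / real (\<Prod>p\<in>P. p^2) = (\<Prod>p\<in>P. 1 - 1 / real p ^ 2)"
proof -
  have "real (\<Prod>p\<in>P. p^2 - 1) / real (\<Prod>p\<in>P. p^2) = (\<Prod>p\<in>P. real (p^2 - 1) / real (p^2))"
    by (simp add: prod_dividef)
  also have "\<dots> = (\<Prod>p\<in>P. 1 - 1 / real p ^ 2)"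
    using assms by (intro prod.cong) (auto simp: field_simps)
  finally show ?thesis .
qed

text \<open>
  The Euler inequality restricted to odd primes: the factor 3/4 of the prime 2 is
  removed, so \<Prod>(1 - 1/p^2) over odd p \<le> N is at most 4 / (3 \<Sum>_{n<=N} 1/n^2).
\<close>
lemma odd_primes_product_bound:
  assumes N: "N \<ge> 2"
  shows "(\<Prod>p\<in>odd_primes_upto N. 1 - 1 / real p ^ 2) \<le> 4 / (3 * inverse_square_sum N)"
proof -
  let ?\<Pi> = "\<Prod>p\<in>odd_primes_upto N. 1 - 1 / real p ^ 2"
  have "{p. prime p \<and> p \<le> N} = insert 2 (odd_primes_upto N)"
    using N prime_odd_nat[of _] prime_ge_2_nat unfolding odd_primes_upto_def
    by (auto, metis le_neq_implies_less)
  moreover have "2 \<notin> odd_primes_upto N" unfolding odd_primes_upto_def by simp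
  ultimately have two: "(\<Prod>p\<in>{p. prime p \<and> p \<le> N}. 1 - 1 / real p ^ 2) = 3 / 4 * ?\<Pi>"
    using finite_odd_primes_upto by simp
  have euler: "3 / 4 * ?\<Pi> * inverse_square_sum N \<le> 1"
    using euler_product_inequality[of N] unfolding two .
  have "inverse_square_sum N \<ge> 1"
    unfolding inverse_square_sum_def using N
    by (intro order.trans[OF _ sum_mono2[of "{1..N}" "{1}"]]) auto
  with euler show ?thesis by (simp add: field_simps)
qed

text \<open>
  A has density at least 1/4 - 1/(3 \<Sum>_{n<=N} 1/n^2): within one period 4Q it contains all
  n \<equiv> 2 (mod 4) divisible by some p^2, a proportion 1/4 - (1/4) \<Prod>(1 - 1/p^2).
\<close>
lemma sieve_set_density:
  assumes N: "N \<ge> 2"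
  shows "\<exists>d. has_density (sieve_set N) d \<and> d \<ge> 1/4 - 1 / (3 * inverse_square_sum N)"
proof -
  let ?P = "odd_primes_upto N" and ?Q = "sieve_modulus N" and ?A = "sieve_set N"
  define T where "T = 4 * ?Q"
  define R where "R = (\<Prod>p\<in>?P. p^2 - 1)"
  define B where "B = {n. n < T \<and> n mod 4 = 2 \<and> (\<exists>p\<in>?P. p^2 dvd n)}"
  have Q: "real ?Q > 0" using odd_pos[OF odd_sieve_modulus] by simp
  have P: "\<forall>p\<in>?P. prime p \<and> odd p" "\<forall>p\<in>?P. p > 0"
    unfolding odd_primes_upto_def using prime_gt_0_nat by auto
  have "card B + R = ?Q"
    using card_residue_2_sieved[OF finite_odd_primes_upto P(1)]
    unfolding B_def R_def T_def sieve_modulus_def .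
  then have "real ?Q - real R = real (card B)" by (simp flip: of_nat_add)
  also have "card B \<le> card (?A \<inter> {1..T})"
    unfolding B_def sieve_set_def T_def by (intro card_mono) auto
  finally have count: "real ?Q - real R \<le> real (card (?A \<inter> {1..T}))" by simp
  have "1/4 - real R / real ?Q / 4 = (real ?Q - real R) / real T"
    using Q unfolding T_def by (simp add: field_simps)
  also have "\<dots> \<le> real (card (?A \<inter> {1..T})) / real T"
    using count by (intro divide_right_mono) auto
  finally have "1/4 - real R / real ?Q / 4 \<le> real (card (?A \<inter> {1..T})) / real T" .
  moreover have "real R / real ?Q \<le> 4 / (3 * inverse_square_sum N)"
    using prod_inverse_squares_ratio[OF P(2)] odd_primes_product_bound[OF N]
    unfolding R_def sieve_modulus_def by simp
  moreover have "has_density ?A (real (card (?A \<inter> {1..T})) / real T)"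
    using Q sieve_set_periodic unfolding T_def by (intro periodic_density) auto
  ultimately show ?thesis by (intro exI[of _ "real (card (?A \<inter> {1..T})) / real T"]) auto
qed

lemma choose_sieve_bound:
  assumes "\<epsilon> > 0"
  shows "\<exists>N\<ge>5. 1 / real N \<le> \<epsilon> \<and> 1 / (3 * inverse_square_sum N) < 2 / pi^2 + \<epsilon>"
proof -
  have "(\<lambda>N. 1 / (3 * inverse_square_sum N)) \<longlonglongrightarrow> 1 / (3 * (pi^2 / 6))"
    by (intro tendsto_intros inverse_square_sum_limit) simp
  moreover have "1 / (3 * (pi^2 / 6)) < 2 / pi^2 + \<epsilon>" using assms by simp
  ultimately have "eventually (\<lambda>N. 1 / (3 * inverse_square_sum N) < 2 / pi^2 + \<epsilon>) sequentially"
    by (rule order_tendstoD(2))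
  moreover have "eventually (\<lambda>N. N \<ge> 5 \<and> 1 / real N \<le> \<epsilon>) sequentially"
    using eventually_ge_at_top[of "max 5 (nat \<lceil>1 / \<epsilon>\<rceil>)"]
  proof eventually_elim
    case (elim N)
    then have "real N \<ge> 1 / \<epsilon>" by linarith
    then show ?case using elim assms by (simp add: field_simps)
  qed
  ultimately have "\<forall>\<^sub>F N in sequentially.
      N \<ge> 5 \<and> 1 / real N \<le> \<epsilon> \<and> 1 / (3 * inverse_square_sum N) < 2 / pi^2 + \<epsilon>"
    by eventually_elim blast
  from eventually_happens'[OF sequentially_bot this] show ?thesis by blast
qed

theorem theorem1:
  fixes \<epsilon> :: real
  assumes "\<epsilon> > 0"
  shows "\<exists>A :: nat set. 0 \<notin> A \<and>
    (\<exists>d. has_density A d \<and> d > 1/4 - 2 / pi\<^sup>2 - \<epsilon>) \<and>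
    (\<forall>x \<in> sumset2 A. \<not> squarefree x) \<and>
    finite {n. n > 0 \<and> n \<notin> sumset3 A} \<and>
    upper_density {n. n > 0 \<and> \<not> squarefree n \<and> n \<notin> sumset2 A} \<le> ereal \<epsilon>"
proof -
  obtain N where N: "N \<ge> 5" "1 / real N \<le> \<epsilon>" "1 / (3 * inverse_square_sum N) < 2 / pi^2 + \<epsilon>"
    using choose_sieve_bound[OF assms] by blast
  let ?A = "sieve_set N" and ?C = "4 * sieve_modulus N + 850"
  have "N \<ge> 2" using N(1) by simp
  then obtain d where "has_density ?A d" "d \<ge> 1/4 - 1 / (3 * inverse_square_sum N)"
    using sieve_set_density by blast
  then have density: "\<exists>d. has_density ?A d \<and> d > 1/4 - 2 / pi\<^sup>2 - \<epsilon>" using N(3) by auto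
  have "n \<le> ?C" if "n \<notin> sumset3 ?A" for n
    using that large_in_sumset3[OF N(1), of n] by (meson not_less)
  then have "{n. n > 0 \<and> n \<notin> sumset3 ?A} \<subseteq> {..?C}" by auto
  then have finite: "finite {n. n > 0 \<and> n \<notin> sumset3 ?A}" by (rule finite_subset) simp
  have "upper_density {n. n > 0 \<and> \<not> squarefree n \<and> n \<notin> sumset2 ?A} \<le> ereal (1 / real N)"
    using large_square_factor_outside_sumset2[OF N(1)] N(1)
    by (intro upper_density_large_square_divisors[where C = ?C]) auto
  also have "\<dots> \<le> ereal \<epsilon>" using N(2) by simp
  finally have upper: "upper_density {n. n > 0 \<and> \<not> squarefree n \<and> n \<notin> sumset2 ?A} \<le> ereal \<epsilon>" .
  have "0 \<notin> ?A" by (simp add: sieve_set_def)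
  moreover have "\<forall>x \<in> sumset2 ?A. \<not> squarefree x"
    using sumset2_sieve_set_not_squarefree[of N] N(1) by auto
  ultimately show ?thesis using density finite upper by blast
qed

end
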